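(* Let $n\ge0$ and let $\mathfrak g_1,\mathfrak g_2$ be Leibniz algebras. Then $\mathfrak g_1\sim_n\mathfrak g_2$ if and only if there exist a Leibniz algebra $\mathfrak h$ with $\mathfrak h\sim_n\mathfrak g_1$ and a surjective Leibniz algebra homomorphism $\theta:\mathfrak h\to\mathfrak g_2$ such that $\operatorname{Ker}(\theta)\cap\gamma_{n+1}^{\mathsf{Lie}}(\mathfrak h)=0$.
   Context: All Leibniz algebras are over a field $\mathbb{K}$ with $\frac12\in\mathbb{K}$. A Leibniz algebra is a vector space $\mathfrak g$ with a bilinear bracket $[-,-]$ satisfying $[x,[y,z]]=[[x,y],z]-[[x,z],y]$. For $x,y\in\mathfrak g$ put $[x,y]_{lie}=[x,y]+[y,x]$. For two-sided ideals $\mathfrak m,\mathfrak n$ of $\mathfrak g$, $[\mathfrak m,\mathfrak n]_{\mathsf{Lie}}$ denotes the two-sided ideal of $\mathfrak g$ generated by $\{[m,x]_{lie}: m\in\mathfrak m, x\in\mathfrak n\}$. Lower Lie-central series: $\gamma_1^{\mathsf{Lie}}(\mathfrak g)=\mathfrak g$, $\gamma_i^{\mathsf{Lie}}(\mathfrak g)=[\gamma_{i-1}^{\mathsf{Lie}}(\mathfrak g),\mathfrak g]_{\mathsf{Lie}}$ for $i\ge2$. Upper Lie-central series: $\mathcal Z_0^{\mathsf{Lie}}(\mathfrak g)=0$, $\mathcal Z_i^{\mathsf{Lie}}(\mathfrak g)=\{x\in\mathfrak g:[x,y]_{lie}\in\mathcal Z_{i-1}^{\mathsf{Lie}}(\mathfrak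 g)\ \text{for all } y\in\mathfrak g\}$ for $i\ge1$. For $n\ge0$, Leibniz algebras $\mathfrak g_1,\mathfrak g_2$ are $n$-Lie-isoclinic, written $\mathfrak g_1\sim_n\mathfrak g_2$, if there exist Leibniz algebra isomorphisms $\eta:\mathfrak g_1/\mathcal Z_n^{\mathsf{Lie}}(\mathfrak g_1)\to\mathfrak g_2/\mathcal Z_n^{\mathsf{Lie}}(\mathfrak g_2)$ and $\xi:\gamma_{n+1}^{\mathsf{Lie}}(\mathfrak g_1)\to\gamma_{n+1}^{\mathsf{Lie}}(\mathfrak g_2)$ such that $\xi([\cdots[[x_1,x_2]_{lie},x_3]_{lie},\ldots,x_{n+1}]_{lie})=[\cdots[[y_1,y_2]_{lie},y_3]_{lie},\ldots,y_{n+1}]_{lie}$ whenever $x_i\in\mathfrak g_1$, $y_i\in\mathfrak g_2$ satisfy $\eta(x_i+\mathcal Z_n^{\mathsf{Lie}}(\mathfrak g_1))=y_i+\mathcal Z_n^{\mathsf{Lie}}(\mathfrak g_2)$ for $i=1,\ldots,n+1$. *)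

theory Defs
  imports Main
begin

record ('k, 'a) lalg =
  carr  :: "'a set"
  ladd  :: "'a \<Rightarrow> 'a \<Rightarrow> 'a"
  lzero :: "'a"
  lsmul :: "'k \<Rightarrow> 'a \<Rightarrow> 'a"
  lbr   :: "'a \<Rightarrow> 'a \<Rightarrow> 'a"

definition vspace :: "('k::field, 'a) lalg \<Rightarrow> bool" where
  "vspace L \<longleftrightarrow>
     lzero L \<in> carr L \<and>
     (\<forall>x\<in>carr L. \<forall>y\<in>carr L. ladd L x y \<in> carr L) \<and>
     (\<forall>c. \<forall>x\<in>carr L. lsmul L c x \<in> carr L) \<and>
     (\<forall>x\<in>carr L. \<forall>y\<in>carr L. \<forall>z\<in>carr L. ladd L (ladd L x y) z = ladd L x (ladd L y z)) \<and>
     (\<forall>x\<in>carr L. \<forall>y\<in>carr L. ladd L x y = ladd L y x) \<and>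
     (\<forall>x\<in>carr L. ladd L (lzero L) x = x) \<and>
     (\<forall>x\<in>carr L. \<exists>y\<in>carr L. ladd L x y = lzero L) \<and>
     (\<forall>c. \<forall>x\<in>carr L. \<forall>y\<in>carr L. lsmul L c (ladd L x y) = ladd L (lsmul L c x) (lsmul L c y)) \<and>
     (\<forall>c d. \<forall>x\<in>carr L. lsmul L (c + d) x = ladd L (lsmul L c x) (lsmul L d x)) \<and>
     (\<forall>c d. \<forall>x\<in>carr L. lsmul L (c * d) x = lsmul L c (lsmul L d x)) \<and>
     (\<forall>x\<in>carr L. lsmul L 1 x = x)"

text \<open>Leibniz algebra: vector space, bilinear bracket closed on the carrier,
and the Leibniz identity [x,[y,z]] = [[x,y],z] - [[x,z],y], written additively.\<close>

definition leibniz :: "('k::field, 'a) lalg \<Rightarrow> bool" where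
  "leibniz L \<longleftrightarrow> vspace L \<and>
     (\<forall>x\<in>carr L. \<forall>y\<in>carr L. lbr L x y \<in> carr L) \<and>
     (\<forall>x\<in>carr L. \<forall>y\<in>carr L. \<forall>z\<in>carr L.
        lbr L (ladd L x y) z = ladd L (lbr L x z) (lbr L y z) \<and>
        lbr L z (ladd L x y) = ladd L (lbr L z x) (lbr L z y)) \<and>
     (\<forall>c. \<forall>x\<in>carr L. \<forall>y\<in>carr L.
        lbr L (lsmul L c x) y = lsmul L c (lbr L x y) \<and>
        lbr L x (lsmul L c y) = lsmul L c (lbr L x y)) \<and>
     (\<forall>x\<in>carr L. \<forall>y\<in>carr L. \<forall>z\<in>carr L.
        ladd L (lbr L x (lbr L y z)) (lbr L (lbr L x z) y) = lbr L (lbr L x y) z)"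

definition lie_br :: "('k, 'a) lalg \<Rightarrow> 'a \<Rightarrow> 'a \<Rightarrow> 'a" where
  "lie_br L x y = ladd L (lbr L x y) (lbr L y x)"

definition subspace :: "('k, 'a) lalg \<Rightarrow> 'a set \<Rightarrow> bool" where
  "subspace L I \<longleftrightarrow> I \<subseteq> carr L \<and> lzero L \<in> I \<and>
     (\<forall>x\<in>I. \<forall>y\<in>I. ladd L x y \<in> I) \<and> (\<forall>c. \<forall>x\<in>I. lsmul L c x \<in> I)"

definition ideal :: "('k, 'a) lalg \<Rightarrow> 'a set \<Rightarrow> bool" where
  "ideal L I \<longleftrightarrow> subspace L I \<and>
     (\<forall>x\<in>I. \<forall>y\<in>carr L. lbr L x y \<in> I \<and> lbr L y x \<in> I)"

definition ideal_gen :: "('k, 'a) lalg \<Rightarrow> 'a set \<Rightarrow> 'a set" where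
  "ideal_gen L X = \<Inter> {I. ideal L I \<and> X \<subseteq> I}"

definition lie_comm :: "('k, 'a) lalg \<Rightarrow> 'a set \<Rightarrow> 'a set \<Rightarrow> 'a set" where
  "lie_comm L M N = ideal_gen L {lie_br L m x | m x. m \<in> M \<and> x \<in> N}"

text \<open>Lower Lie-central series with the paper's indexing: gamma_lie L i for i \<ge> 1
(gamma_lie L 0 is set to the whole algebra as well, it is never used).\<close>
fun gamma_lie :: "('k, 'a) lalg \<Rightarrow> nat \<Rightarrow> 'a set" where
  "gamma_lie L 0 = carr L"
| "gamma_lie L (Suc 0) = carr L"
| "gamma_lie L (Suc (Suc i)) = lie_comm L (gamma_lie L (Suc i)) (carr L)"

fun zeta_lie :: "('k, 'a) lalg \<Rightarrow> nat \<Rightarrow> 'a set" where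
  "zeta_lie L 0 = {lzero L}"
| "zeta_lie L (Suc i) = {x \<in> carr L. \<forall>y\<in>carr L. lie_br L x y \<in> zeta_lie L i}"

fun lie_iter :: "('k, 'a) lalg \<Rightarrow> (nat \<Rightarrow> 'a) \<Rightarrow> nat \<Rightarrow> 'a" where
  "lie_iter L x 0 = x 0"
| "lie_iter L x (Suc k) = lie_br L (lie_iter L x k) (x (Suc k))"

definition coset :: "('k, 'a) lalg \<Rightarrow> 'a set \<Rightarrow> 'a \<Rightarrow> 'a set" where
  "coset L I x = {ladd L x z | z. z \<in> I}"

definition quot :: "('k, 'a) lalg \<Rightarrow> 'a set \<Rightarrow> ('k, 'a set) lalg" where
  "quot L I = \<lparr> carr = coset L I ` carr L,
      ladd = (\<lambda>A B. coset L I (ladd L (SOME a. a \<in> A) (SOME b. b \<in> B))),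
      lzero = coset L I (lzero L),
      lsmul = (\<lambda>c A. coset L I (lsmul L c (SOME a. a \<in> A))),
      lbr = (\<lambda>A B. coset L I (lbr L (SOME a. a \<in> A) (SOME b. b \<in> B))) \<rparr>"

definition lhom :: "('k, 'a) lalg \<Rightarrow> ('k, 'b) lalg \<Rightarrow> ('a \<Rightarrow> 'b) \<Rightarrow> bool" where
  "lhom L M f \<longleftrightarrow> (\<forall>x\<in>carr L. f x \<in> carr M) \<and>
     (\<forall>x\<in>carr L. \<forall>y\<in>carr L. f (ladd L x y) = ladd M (f x) (f y) \<and>
                            f (lbr L x y) = lbr M (f x) (f y)) \<and>
     (\<forall>c. \<forall>x\<in>carr L. f (lsmul L c x) = lsmul M c (f x))"

definition liso :: "('k, 'a) lalg \<Rightarrow> ('k, 'b) lalg \<Rightarrow> ('a \<Rightarrow> 'b) \<Rightarrow> bool" where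
  "liso L M f \<longleftrightarrow> lhom L M f \<and> bij_betw f (carr L) (carr M)"

definition isoclinic :: "nat \<Rightarrow> ('k, 'a) lalg \<Rightarrow> ('k, 'b) lalg \<Rightarrow> bool" where
  "isoclinic n L1 L2 \<longleftrightarrow>
     (\<exists>\<eta> \<xi>. liso (quot L1 (zeta_lie L1 n)) (quot L2 (zeta_lie L2 n)) \<eta> \<and>
       liso (L1\<lparr>carr := gamma_lie L1 (Suc n)\<rparr>) (L2\<lparr>carr := gamma_lie L2 (Suc n)\<rparr>) \<xi> \<and>
       (\<forall>x y. (\<forall>i\<le>n. x i \<in> carr L1 \<and> y i \<in> carr L2 \<and>
                 \<eta> (coset L1 (zeta_lie L1 n) (x i)) = coset L2 (zeta_lie L2 n) (y i))
              \<longrightarrow> \<xi> (lie_iter L1 x n) = lie_iter L2 y n))"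

definition lkernel :: "('k, 'a) lalg \<Rightarrow> ('k, 'b) lalg \<Rightarrow> ('a \<Rightarrow> 'b) \<Rightarrow> 'a set" where
  "lkernel L M f = {x \<in> carr L. f x = lzero M}"

end

theory Submission
  imports Defs
begin

(*
  An n-isoclinism (\<eta>, \<xi>) makes the iterated Lie bracket of n + 1 arguments depend only on
  their classes modulo Z_n^Lie: two tuples with the same classes are matched by \<eta> with one
  tuple on the other side, so their brackets have the same image under \<xi>, which is injective
  on gamma_{n+1}^Lie.

  Let \<theta> : H \<rightarrow> M be onto with Ker \<theta> \<inter> gamma_{n+1}^Lie(H) = 0. Then \<theta> maps gamma_{n+1}^Lie(H)
  isomorphically onto gamma_{n+1}^Lie(M), and a descending induction along the lower series shows
  that Z_n^Lie(H) is exactly the preimage of Z_n^Lie(M), so \<theta> also induces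
  H/Z_n^Lie(H) \<cong> M/Z_n^Lie(M). These two isomorphisms are compatible with the iterated
  brackets, i.e. form an n-isoclinism, as soon as that bracket is invariant in the above sense
  on one side.

  Since n-isoclinism is an equivalence relation, the "if" part follows from g1 ~ H ~ g2, and for
  the "only if" part H can be taken to be a copy of g2 with \<theta> the identity.
*)

locale leibniz_algebra =
  fixes L :: "('k::field, 'a) lalg"
  assumes leibniz: "leibniz L"
begin

lemma zero_closed [simp]: "lzero L \<in> carr L"
  using leibniz unfolding leibniz_def vspace_def by (elim conjE) blast

lemma add_closed [simp]: "x \<in> carr L \<Longrightarrow> y \<in> carr L \<Longrightarrow> ladd L x y \<in> carr L"
  using leibniz unfolding leibniz_def vspace_def by (elim conjE) blast

lemma smul_closed [simp]: "x \<in> carr L \<Longrightarrow> lsmul L c x \<in> carr L"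
  using leibniz unfolding leibniz_def vspace_def by (elim conjE) blast

lemma br_closed [simp]: "x \<in> carr L \<Longrightarrow> y \<in> carr L \<Longrightarrow> lbr L x y \<in> carr L"
  using leibniz unfolding leibniz_def vspace_def by (elim conjE) blast

lemma add_assoc:
  "x \<in> carr L \<Longrightarrow> y \<in> carr L \<Longrightarrow> z \<in> carr L \<Longrightarrow> ladd L (ladd L x y) z = ladd L x (ladd L y z)"
  using leibniz unfolding leibniz_def vspace_def by (elim conjE) blast

lemma add_commute: "x \<in> carr L \<Longrightarrow> y \<in> carr L \<Longrightarrow> ladd L x y = ladd L y x"
  using leibniz unfolding leibniz_def vspace_def by (elim conjE) blast

lemma add_left_commute:
  "x \<in> carr L \<Longrightarrow> y \<in> carr L \<Longrightarrow> z \<in> carr L \<Longrightarrow> ladd L x (ladd L y z) = ladd L y (ladd L x z)"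
  by (metis add_assoc add_commute)

lemmas add_ac = add_assoc add_commute add_left_commute

lemma zero_add [simp]: "x \<in> carr L \<Longrightarrow> ladd L (lzero L) x = x"
  using leibniz unfolding leibniz_def vspace_def by (elim conjE) blast

lemma add_zero [simp]: "x \<in> carr L \<Longrightarrow> ladd L x (lzero L) = x"
  using add_commute zero_add zero_closed by metis

lemma smul_add: "x \<in> carr L \<Longrightarrow> y \<in> carr L \<Longrightarrow> lsmul L c (ladd L x y) = ladd L (lsmul L c x) (lsmul L c y)"
  using leibniz unfolding leibniz_def vspace_def by (elim conjE) blast

lemma add_smul: "x \<in> carr L \<Longrightarrow> lsmul L (c + d) x = ladd L (lsmul L c x) (lsmul L d x)"
  using leibniz unfolding leibniz_def vspace_def by (elim conjE) blast

lemma smul_smul: "x \<in> carr L \<Longrightarrow> lsmul L (c * d) x = lsmul L c (lsmul L d x)"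
  using leibniz unfolding leibniz_def vspace_def by (elim conjE) blast

lemma one_smul [simp]: "x \<in> carr L \<Longrightarrow> lsmul L 1 x = x"
  using leibniz unfolding leibniz_def vspace_def by (elim conjE) simp

lemma br_add_left:
  "x \<in> carr L \<Longrightarrow> y \<in> carr L \<Longrightarrow> z \<in> carr L \<Longrightarrow> lbr L (ladd L x y) z = ladd L (lbr L x z) (lbr L y z)"
  using leibniz unfolding leibniz_def by (elim conjE) blast

lemma br_add_right:
  "x \<in> carr L \<Longrightarrow> y \<in> carr L \<Longrightarrow> z \<in> carr L \<Longrightarrow> lbr L z (ladd L x y) = ladd L (lbr L z x) (lbr L z y)"
  using leibniz unfolding leibniz_def by (elim conjE) blast

lemma br_smul_left: "x \<in> carr L \<Longrightarrow> y \<in> carr L \<Longrightarrow> lbr L (lsmul L c x) y = lsmul L c (lbr L x y)"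
  using leibniz unfolding leibniz_def by (elim conjE) blast

lemma br_smul_right: "x \<in> carr L \<Longrightarrow> y \<in> carr L \<Longrightarrow> lbr L x (lsmul L c y) = lsmul L c (lbr L x y)"
  using leibniz unfolding leibniz_def by (elim conjE) blast

lemma leibniz_identity:
  "x \<in> carr L \<Longrightarrow> y \<in> carr L \<Longrightarrow> z \<in> carr L \<Longrightarrow>
   ladd L (lbr L x (lbr L y z)) (lbr L (lbr L x z) y) = lbr L (lbr L x y) z"
  using leibniz unfolding leibniz_def by (elim conjE) blast

lemma ex_add_inverse: "x \<in> carr L \<Longrightarrow> \<exists>y\<in>carr L. ladd L x y = lzero L"
  using leibniz unfolding leibniz_def vspace_def by (elim conjE) blast

lemma idempotent_eq_zero:
  assumes v: "v \<in> carr L" and vv: "ladd L v v = v"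
  shows "v = lzero L"
proof -
  obtain y where y: "y \<in> carr L" "ladd L v y = lzero L" using ex_add_inverse[OF v] by blast
  have "v = ladd L v (ladd L v y)" using v y by simp
  also have "\<dots> = ladd L (ladd L v v) y" using v y by (simp add: add_assoc)
  also have "\<dots> = lzero L" using vv y by simp
  finally show ?thesis .
qed

lemma zero_smul [simp]: "x \<in> carr L \<Longrightarrow> lsmul L 0 x = lzero L"
  by (rule idempotent_eq_zero) (simp_all add: add_smul[symmetric])

lemma smul_zero [simp]: "lsmul L c (lzero L) = lzero L"
  by (rule idempotent_eq_zero) (simp_all add: smul_add[symmetric])

lemma br_zero_left [simp]: "y \<in> carr L \<Longrightarrow> lbr L (lzero L) y = lzero L"
  by (rule idempotent_eq_zero) (simp_all add: br_add_left[symmetric])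

lemma br_zero_right [simp]: "y \<in> carr L \<Longrightarrow> lbr L y (lzero L) = lzero L"
  by (rule idempotent_eq_zero) (simp_all add: br_add_right[symmetric])

definition neg :: "'a \<Rightarrow> 'a" where
  "neg x = lsmul L (-1) x"

lemma neg_closed [simp]: "x \<in> carr L \<Longrightarrow> neg x \<in> carr L"
  by (simp add: neg_def)

lemma add_neg [simp]: "x \<in> carr L \<Longrightarrow> ladd L x (neg x) = lzero L"
  using add_smul[of x 1 "-1"] by (simp add: neg_def)

lemma add_neg_cancel [simp]: "x \<in> carr L \<Longrightarrow> y \<in> carr L \<Longrightarrow> ladd L x (ladd L (neg x) y) = y"
  by (simp add: add_assoc[symmetric])

lemma add_neg_eq_zeroD:
  assumes "x \<in> carr L" "y \<in> carr L" "ladd L x (neg y) = lzero L"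
  shows "x = y"
proof -
  have "ladd L (ladd L x (neg y)) y = y" using assms by simp
  then show ?thesis using assms(1,2) by (simp add: add_assoc add_commute[of "neg y" y])
qed

lemma add_cancel_left:
  assumes "a \<in> carr L" "b \<in> carr L" "c \<in> carr L" "ladd L a b = ladd L a c"
  shows "b = c"
proof -
  have "ladd L (neg a) (ladd L a b) = ladd L (neg a) (ladd L a c)" using assms(4) by simp
  then show ?thesis using assms(1-3) by (simp add: add_assoc[symmetric] add_commute[of "neg a" a])
qed

lemma br_lie_br_right_zero:
  assumes x: "x \<in> carr L" and a: "a \<in> carr L" and y: "y \<in> carr L"
  shows "lbr L x (lie_br L a y) = lzero L"
proof -
  define p where "p = lbr L x (lbr L a y)"
  define q where "q = lbr L x (lbr L y a)"
  define P where "P = lbr L (lbr L x a) y"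
  define Q where "Q = lbr L (lbr L x y) a"
  have c: "p \<in> carr L" "q \<in> carr L" "P \<in> carr L" "Q \<in> carr L"
    using x a y by (simp_all add: p_def q_def P_def Q_def)
  have pQ: "ladd L p Q = P" using leibniz_identity[OF x a y] by (simp add: p_def Q_def P_def)
  have qP: "ladd L q P = Q" using leibniz_identity[OF x y a] by (simp add: q_def Q_def P_def)
  have "ladd L (ladd L p q) (ladd L P Q) = ladd L (ladd L p Q) (ladd L q P)"
    using c by (simp add: add_ac)
  also have "\<dots> = ladd L (lzero L) (ladd L P Q)" using c by (simp add: pQ qP add_commute)
  finally have "ladd L p q = lzero L"
    using c add_cancel_left add_commute by (metis add_closed zero_closed)
  then show ?thesis using x a y by (simp add: lie_br_def br_add_right p_def q_def)
qed

lemma lie_br_closed [simp]: "x \<in> carr L \<Longrightarrow> y \<in> carr L \<Longrightarrow> lie_br L x y \<in> carr L"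
  by (simp add: lie_br_def)

lemma lie_br_add_left:
  "x \<in> carr L \<Longrightarrow> x' \<in> carr L \<Longrightarrow> y \<in> carr L \<Longrightarrow>
   lie_br L (ladd L x x') y = ladd L (lie_br L x y) (lie_br L x' y)"
  by (simp add: lie_br_def br_add_left br_add_right add_ac)

lemma lie_br_smul_left:
  "x \<in> carr L \<Longrightarrow> y \<in> carr L \<Longrightarrow> lie_br L (lsmul L c x) y = lsmul L c (lie_br L x y)"
  by (simp add: lie_br_def br_smul_left br_smul_right smul_add)

text \<open>This identity is what makes each Z_i^Lie closed under brackets with the whole algebra.\<close>

lemma lie_br_br_left:
  assumes x: "x \<in> carr L" and a: "a \<in> carr L" and y: "y \<in> carr L"
  shows "ladd L (lie_br L (lbr L x a) y) (lie_br L x (lie_br L a y)) =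
         ladd L (lie_br L x (lbr L a y)) (lbr L (lie_br L x y) a)"
proof -
  have x_ay: "lbr L x (lie_br L a y) = lzero L" using br_lie_br_right_zero[OF x a y] .
  have "lie_br L x (lie_br L a y) = lbr L (lie_br L a y) x"
    using x_ay x a y by (simp add: lie_br_def)
  also have "\<dots> = ladd L (lbr L (lbr L a y) x) (lbr L (lbr L y a) x)"
    using x a y by (simp add: lie_br_def br_add_left)
  finally have x_lie_ay: "lie_br L x (lie_br L a y) = ladd L (lbr L (lbr L a y) x) (lbr L (lbr L y a) x)" .
  have xa_y: "lbr L (lbr L x a) y = ladd L (lbr L x (lbr L a y)) (lbr L (lbr L x y) a)"
    using leibniz_identity[OF x a y] by simp
  have yx_a: "lbr L (lbr L y x) a = ladd L (lbr L y (lbr L x a)) (lbr L (lbr L y a) x)"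
    using leibniz_identity[OF y x a] by simp
  show ?thesis
    using x a y x_ay[unfolded lie_br_def] by (simp add: x_lie_ay lie_br_def br_add_left xa_y yx_a add_ac)
qed

end

section \<open>Ideals and the Lie-central series\<close>

lemma subspace_carr: "subspace L I \<Longrightarrow> x \<in> I \<Longrightarrow> x \<in> carr L"
  by (auto simp: subspace_def)

lemma subspace_zero: "subspace L I \<Longrightarrow> lzero L \<in> I"
  by (simp add: subspace_def)

lemma subspace_add: "subspace L I \<Longrightarrow> x \<in> I \<Longrightarrow> y \<in> I \<Longrightarrow> ladd L x y \<in> I"
  by (simp add: subspace_def)

lemma subspace_smul: "subspace L I \<Longrightarrow> x \<in> I \<Longrightarrow> lsmul L c x \<in> I"
  by (simp add: subspace_def)

lemma ideal_subspace: "ideal L I \<Longrightarrow> subspace L I"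
  by (simp add: ideal_def)

lemma ideal_subset_carr: "ideal L I \<Longrightarrow> I \<subseteq> carr L"
  by (auto simp: ideal_def subspace_def)

lemma ideal_br_left: "ideal L I \<Longrightarrow> x \<in> I \<Longrightarrow> y \<in> carr L \<Longrightarrow> lbr L x y \<in> I"
  by (simp add: ideal_def)

lemma ideal_br_right: "ideal L I \<Longrightarrow> x \<in> I \<Longrightarrow> y \<in> carr L \<Longrightarrow> lbr L y x \<in> I"
  by (simp add: ideal_def)

lemma ideal_lie_br: "ideal L I \<Longrightarrow> x \<in> I \<Longrightarrow> y \<in> carr L \<Longrightarrow> lie_br L x y \<in> I"
  unfolding lie_br_def by (meson ideal_br_left ideal_br_right ideal_subspace subspace_add)

lemma subset_ideal_gen: "X \<subseteq> ideal_gen L X"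
  by (auto simp: ideal_gen_def)

lemma ideal_gen_least: "ideal L I \<Longrightarrow> X \<subseteq> I \<Longrightarrow> ideal_gen L X \<subseteq> I"
  by (auto simp: ideal_gen_def)

lemma lie_br_mem_lie_comm: "m \<in> M \<Longrightarrow> x \<in> N \<Longrightarrow> lie_br L m x \<in> lie_comm L M N"
  using subset_ideal_gen by (fastforce simp: lie_comm_def)

lemma lie_iter_mem_gamma: "(\<forall>i\<le>k. x i \<in> carr L) \<Longrightarrow> lie_iter L x k \<in> gamma_lie L (Suc k)"
  by (induction k) (auto intro: lie_br_mem_lie_comm)

lemma lie_iter_cong: "(\<forall>i\<le>k. x i = y i) \<Longrightarrow> lie_iter L x k = lie_iter L y k"
  by (induction k) auto

context leibniz_algebra
begin

lemma subspace_neg: "subspace L I \<Longrightarrow> x \<in> I \<Longrightarrow> neg x \<in> I"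
  by (simp add: neg_def subspace_smul)

lemma subspace_cancel:
  assumes I: "subspace L I" and u: "u \<in> carr L" and v: "v \<in> I" and uv: "ladd L u v \<in> I"
  shows "u \<in> I"
proof -
  have "v \<in> carr L" using subspace_carr[OF I v] .
  then have "u = ladd L (ladd L u v) (neg v)" using u by (simp add: add_assoc)
  then show ?thesis using subspace_add[OF I uv subspace_neg[OF I v]] by simp
qed

lemma ideal_carr: "ideal L (carr L)"
  by (simp add: ideal_def subspace_def)

lemma ideal_ideal_gen:
  assumes X: "X \<subseteq> carr L"
  shows "ideal L (ideal_gen L X)"
  unfolding ideal_def subspace_def
proof (intro conjI ballI allI)
  show "ideal_gen L X \<subseteq> carr L" using ideal_gen_least[OF ideal_carr X] .
  show "lzero L \<in> ideal_gen L X" by (auto simp: ideal_gen_def ideal_def subspace_def)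
  fix x assume x: "x \<in> ideal_gen L X"
  show "ladd L x y \<in> ideal_gen L X" if "y \<in> ideal_gen L X" for y
    using x that by (auto simp: ideal_gen_def ideal_def subspace_def)
  show "lsmul L c x \<in> ideal_gen L X" for c
    using x by (auto simp: ideal_gen_def ideal_def subspace_def)
  show "lbr L x y \<in> ideal_gen L X" "lbr L y x \<in> ideal_gen L X" if "y \<in> carr L" for y
    using x that by (auto simp: ideal_gen_def ideal_def)
qed

lemma ideal_lie_comm: "M \<subseteq> carr L \<Longrightarrow> N \<subseteq> carr L \<Longrightarrow> ideal L (lie_comm L M N)"
  unfolding lie_comm_def by (rule ideal_ideal_gen) (blast intro: lie_br_closed)

lemma ideal_gamma: "ideal L (gamma_lie L k)"
proof (induction k)
  case 0
  show ?case by (simp add: ideal_carr)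
next
  case (Suc k)
  then have "gamma_lie L k \<subseteq> carr L" by (rule ideal_subset_carr)
  then show ?case by (cases k) (simp_all add: ideal_carr ideal_lie_comm)
qed

lemma gamma_subset_carr: "gamma_lie L k \<subseteq> carr L"
  by (rule ideal_subset_carr[OF ideal_gamma])

lemma ideal_zeta: "ideal L (zeta_lie L i)"
proof (induction i)
  case 0
  show ?case by (simp add: ideal_def subspace_def)
next
  case (Suc i)
  let ?Z = "zeta_lie L i" and ?Z' = "zeta_lie L (Suc i)"
  have Z: "subspace L ?Z" using Suc.IH ideal_subspace by blast
  have Z_le: "?Z \<subseteq> ?Z'"
    using Suc.IH ideal_subset_carr ideal_lie_br by fastforce
  have Z': "subspace L ?Z'"
    unfolding subspace_def
  proof (intro conjI ballI allI)
    show "?Z' \<subseteq> carr L" by auto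
    show "lzero L \<in> ?Z'" using subspace_zero[OF Z] by (simp add: lie_br_def)
    fix x assume x: "x \<in> ?Z'"
    show "ladd L x y \<in> ?Z'" if "y \<in> ?Z'" for y
      using x that subspace_add[OF Z] by (auto simp: lie_br_add_left)
    show "lsmul L c x \<in> ?Z'" for c
      using x subspace_smul[OF Z] by (auto simp: lie_br_smul_left)
  qed
  show ?case unfolding ideal_def
  proof (intro conjI ballI)
    show "subspace L ?Z'" by (rule Z')
    fix x y assume x: "x \<in> ?Z'" and y: "y \<in> carr L"
    have xc: "x \<in> carr L" using x by simp
    show xy: "lbr L x y \<in> ?Z'"
    proof -
      have "lie_br L (lbr L x y) w \<in> ?Z" if w: "w \<in> carr L" for w
      proof (rule subspace_cancel[OF Z])
        show "lie_br L (lbr L x y) w \<in> carr L" using xc y w by simp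
        show "lie_br L x (lie_br L y w) \<in> ?Z" using x y w by simp
        have "ladd L (lie_br L x (lbr L y w)) (lbr L (lie_br L x w) y) \<in> ?Z"
          using x y w by (intro subspace_add[OF Z] ideal_br_left[OF Suc.IH]) auto
        then show "ladd L (lie_br L (lbr L x y) w) (lie_br L x (lie_br L y w)) \<in> ?Z"
          using lie_br_br_left[OF xc y w] by simp
      qed
      then show ?thesis using xc y by simp
    qed
    have "ladd L (lbr L y x) (lbr L x y) = lie_br L x y"
      using xc y by (simp add: lie_br_def add_commute)
    moreover have "lie_br L x y \<in> ?Z'" using Z_le x y by auto
    ultimately show "lbr L y x \<in> ?Z'"
      using subspace_cancel[OF Z' _ xy] xc y by simp
  qed
qed

lemma zeta_subset_carr: "zeta_lie L i \<subseteq> carr L"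
  by (rule ideal_subset_carr[OF ideal_zeta])

lemma mem_coset_iff: "y \<in> coset L I a \<longleftrightarrow> (\<exists>z\<in>I. y = ladd L a z)"
  by (auto simp: coset_def)

lemma mem_coset_self: "subspace L I \<Longrightarrow> a \<in> carr L \<Longrightarrow> a \<in> coset L I a"
  using subspace_zero by (force simp: coset_def)

lemma coset_add_eq:
  assumes I: "subspace L I" and a: "a \<in> carr L" and z: "z \<in> I"
  shows "coset L I (ladd L a z) = coset L I a"
proof
  have zc: "z \<in> carr L" using subspace_carr[OF I z] .
  show "coset L I (ladd L a z) \<subseteq> coset L I a"
  proof
    fix y assume "y \<in> coset L I (ladd L a z)"
    then obtain w where w: "w \<in> I" "y = ladd L (ladd L a z) w" by (auto simp: mem_coset_iff)
    then have "y = ladd L a (ladd L z w)" using a zc subspace_carr[OF I w(1)] by (simp add: add_assoc)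
    then show "y \<in> coset L I a" using subspace_add[OF I z w(1)] by (auto simp: mem_coset_iff)
  qed
  show "coset L I a \<subseteq> coset L I (ladd L a z)"
  proof
    fix y assume "y \<in> coset L I a"
    then obtain w where w: "w \<in> I" "y = ladd L a w" by (auto simp: mem_coset_iff)
    have "w \<in> carr L" using subspace_carr[OF I w(1)] .
    then have "y = ladd L (ladd L a z) (ladd L (neg z) w)" using a zc w(2) by (simp add: add_assoc)
    then show "y \<in> coset L I (ladd L a z)"
      using subspace_add[OF I subspace_neg[OF I z] w(1)] by (auto simp: mem_coset_iff)
  qed
qed

lemma coset_eqD:
  assumes "subspace L I" "b \<in> carr L" "coset L I a = coset L I b"
  shows "\<exists>z\<in>I. b = ladd L a z"
  using mem_coset_self[OF assms(1,2)] assms(3) by (auto simp: mem_coset_iff)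

lemma coset_eq_iff:
  assumes I: "subspace L I" and a: "a \<in> carr L" and b: "b \<in> carr L"
  shows "coset L I a = coset L I b \<longleftrightarrow> ladd L b (neg a) \<in> I"
proof
  assume "coset L I a = coset L I b"
  then obtain z where z: "z \<in> I" "b = ladd L a z" using coset_eqD[OF I b] by blast
  have "ladd L b (neg a) = z"
    using z a subspace_carr[OF I z(1)] by (simp add: add_commute[of a z] add_assoc)
  then show "ladd L b (neg a) \<in> I" using z by simp
next
  assume "ladd L b (neg a) \<in> I"
  moreover have "b = ladd L a (ladd L b (neg a))" using a b by (simp add: add_left_commute[of a b])
  ultimately show "coset L I a = coset L I b" using coset_add_eq[OF I a] by metis
qed

lemma some_coset_rep:
  assumes "subspace L I" "a \<in> carr L"
  obtains z where "z \<in> I" "(SOME x. x \<in> coset L I a) = ladd L a z"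
  using someI[of "\<lambda>x. x \<in> coset L I a", OF mem_coset_self[OF assms]] that
  by (auto simp: mem_coset_iff)

text \<open>The operations of quot act on SOME-chosen representatives; these lemmas show that the
  result does not depend on the choice.\<close>

lemma quot_add:
  assumes I: "ideal L I" and a: "a \<in> carr L" and b: "b \<in> carr L"
  shows "ladd (quot L I) (coset L I a) (coset L I b) = coset L I (ladd L a b)"
proof -
  have S: "subspace L I" using I ideal_subspace by blast
  obtain z where z: "z \<in> I" "(SOME x. x \<in> coset L I a) = ladd L a z"
    by (rule some_coset_rep[OF S a])
  obtain w where w: "w \<in> I" "(SOME x. x \<in> coset L I b) = ladd L b w"
    by (rule some_coset_rep[OF S b])
  have zw: "z \<in> carr L" "w \<in> carr L" using z w subspace_carr[OF S] by auto
  have "ladd L (ladd L a z) (ladd L b w) = ladd L (ladd L a b) (ladd L z w)"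
    using a b zw by (simp add: add_ac)
  then show ?thesis
    using z w coset_add_eq[OF S _ subspace_add[OF S z(1) w(1)]] a b by (simp add: quot_def)
qed

lemma quot_smul:
  assumes I: "ideal L I" and a: "a \<in> carr L"
  shows "lsmul (quot L I) c (coset L I a) = coset L I (lsmul L c a)"
proof -
  have S: "subspace L I" using I ideal_subspace by blast
  obtain z where z: "z \<in> I" "(SOME x. x \<in> coset L I a) = ladd L a z"
    by (rule some_coset_rep[OF S a])
  have "lsmul L c (ladd L a z) = ladd L (lsmul L c a) (lsmul L c z)"
    using a z subspace_carr[OF S] by (simp add: smul_add)
  then show ?thesis
    using z coset_add_eq[OF S _ subspace_smul[OF S z(1)]] a by (simp add: quot_def)
qed

lemma quot_br:
  assumes I: "ideal L I" and a: "a \<in> carr L" and b: "b \<in> carr L"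
  shows "lbr (quot L I) (coset L I a) (coset L I b) = coset L I (lbr L a b)"
proof -
  have S: "subspace L I" using I ideal_subspace by blast
  obtain z where z: "z \<in> I" "(SOME x. x \<in> coset L I a) = ladd L a z"
    by (rule some_coset_rep[OF S a])
  obtain w where w: "w \<in> I" "(SOME x. x \<in> coset L I b) = ladd L b w"
    by (rule some_coset_rep[OF S b])
  have zw: "z \<in> carr L" "w \<in> carr L" using z w subspace_carr[OF S] by auto
  have "lbr L (ladd L a z) (ladd L b w) =
        ladd L (lbr L a b) (ladd L (lbr L a w) (ladd L (lbr L z b) (lbr L z w)))"
    using a b zw by (simp add: br_add_left br_add_right add_ac)
  moreover have "ladd L (lbr L a w) (ladd L (lbr L z b) (lbr L z w)) \<in> I"
    using a b z w zw by (meson I ideal_br_left ideal_br_right S subspace_add)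
  ultimately show ?thesis using z w coset_add_eq[OF S] a b by (simp add: quot_def)
qed

end

lemma carr_quot: "carr (quot L I) = coset L I ` carr L"
  by (simp add: quot_def)

locale leibniz_hom =
  A: leibniz_algebra L + B: leibniz_algebra M
  for L :: "('k::field, 'a) lalg" and M :: "('k, 'b) lalg" +
  fixes f :: "'a \<Rightarrow> 'b"
  assumes hom: "lhom L M f"
begin

lemma hom_closed [simp]: "x \<in> carr L \<Longrightarrow> f x \<in> carr M"
  using hom by (simp add: lhom_def)

lemma hom_add: "x \<in> carr L \<Longrightarrow> y \<in> carr L \<Longrightarrow> f (ladd L x y) = ladd M (f x) (f y)"
  using hom by (simp add: lhom_def)

lemma hom_br: "x \<in> carr L \<Longrightarrow> y \<in> carr L \<Longrightarrow> f (lbr L x y) = lbr M (f x) (f y)"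
  using hom by (simp add: lhom_def)

lemma hom_smul: "x \<in> carr L \<Longrightarrow> f (lsmul L c x) = lsmul M c (f x)"
  using hom by (simp add: lhom_def)

lemma hom_zero [simp]: "f (lzero L) = lzero M"
  using hom_smul[of "lzero L" 0] by simp

lemma hom_neg: "x \<in> carr L \<Longrightarrow> f (A.neg x) = B.neg (f x)"
  by (simp add: A.neg_def B.neg_def hom_smul)

lemma hom_lie_br: "x \<in> carr L \<Longrightarrow> y \<in> carr L \<Longrightarrow> f (lie_br L x y) = lie_br M (f x) (f y)"
  by (simp add: lie_br_def hom_add hom_br)

lemma hom_lie_iter: "(\<forall>i\<le>k. x i \<in> carr L) \<Longrightarrow> f (lie_iter L x k) = lie_iter M (\<lambda>i. f (x i)) k"
proof (induction k)
  case 0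
  then show ?case by simp
next
  case (Suc k)
  have "lie_iter L x k \<in> carr L"
    using lie_iter_mem_gamma[of k x L] Suc.prems A.gamma_subset_carr by auto
  then show ?case using Suc by (simp add: hom_lie_br)
qed

lemma hom_lie_iter_eq:
  assumes "\<forall>i\<le>k. x i \<in> carr L \<and> f (x i) = y i"
  shows "f (lie_iter L x k) = lie_iter M y k"
proof -
  have "f (lie_iter L x k) = lie_iter M (\<lambda>i. f (x i)) k" using assms by (simp add: hom_lie_iter)
  also have "\<dots> = lie_iter M y k" using assms by (intro lie_iter_cong) simp
  finally show ?thesis .
qed

lemma ideal_preimage:
  assumes J: "ideal M J"
  shows "ideal L {x \<in> carr L. f x \<in> J}"
  unfolding ideal_def subspace_def
proof (intro conjI ballI allI)
  have S: "subspace M J" using ideal_subspace[OF J] .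
  show "{x \<in> carr L. f x \<in> J} \<subseteq> carr L" by auto
  show "lzero L \<in> {x \<in> carr L. f x \<in> J}" using subspace_zero[OF S] by simp
  fix x assume x: "x \<in> {x \<in> carr L. f x \<in> J}"
  show "ladd L x y \<in> {x \<in> carr L. f x \<in> J}" if "y \<in> {x \<in> carr L. f x \<in> J}" for y
    using x that subspace_add[OF S] by (auto simp: hom_add)
  show "lsmul L c x \<in> {x \<in> carr L. f x \<in> J}" for c
    using x subspace_smul[OF S] by (auto simp: hom_smul)
  show "lbr L x y \<in> {x \<in> carr L. f x \<in> J}" "lbr L y x \<in> {x \<in> carr L. f x \<in> J}"
    if "y \<in> carr L" for y
    using x that ideal_br_left[OF J] ideal_br_right[OF J] by (auto simp: hom_br)
qed

end

locale leibniz_epi = leibniz_hom +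
  assumes surj: "f ` carr L = carr M"
begin

lemma obtain_preimage_seq:
  assumes y: "\<forall>i\<le>k. y i \<in> carr M"
  obtains x where "\<forall>i\<le>k. x i \<in> carr L \<and> f (x i) = y i"
proof -
  have "\<exists>a. i \<le> k \<longrightarrow> a \<in> carr L \<and> f a = y i" for i
  proof (cases "i \<le> k")
    case True
    then have "y i \<in> f ` carr L" using y surj by simp
    then show ?thesis by auto
  qed simp
  then obtain x where "\<forall>i. i \<le> k \<longrightarrow> x i \<in> carr L \<and> f (x i) = y i" by metis
  then show thesis by (intro that) simp
qed

lemma ideal_image:
  assumes I: "ideal L I"
  shows "ideal M (f ` I)"
  unfolding ideal_def subspace_def
proof (intro conjI ballI allI)
  have S: "subspace L I" using ideal_subspace[OF I] .
  have Ic: "I \<subseteq> carr L" using ideal_subset_carr[OF I] .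
  show "f ` I \<subseteq> carr M" using Ic by auto
  show "lzero M \<in> f ` I" using subspace_zero[OF S] hom_zero by (metis image_eqI)
  fix x assume "x \<in> f ` I"
  then obtain a where a: "a \<in> I" "x = f a" by auto
  show "ladd M x y \<in> f ` I" if y: "y \<in> f ` I" for y
  proof -
    obtain b where b: "b \<in> I" "y = f b" using y by auto
    have "ladd M x y = f (ladd L a b)" using a b Ic by (simp add: hom_add subset_eq)
    then show ?thesis using subspace_add[OF S a(1) b(1)] by auto
  qed
  show "lsmul M c x \<in> f ` I" for c
  proof -
    have "lsmul M c x = f (lsmul L c a)" using a Ic by (auto simp: hom_smul)
    then show ?thesis using subspace_smul[OF S a(1)] by auto
  qed
  show "lbr M x y \<in> f ` I" "lbr M y x \<in> f ` I" if y: "y \<in> carr M" for y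
  proof -
    obtain h where h: "h \<in> carr L" "y = f h" using y surj by auto
    have "lbr M x y = f (lbr L a h)" "lbr M y x = f (lbr L h a)" using a Ic h by (auto simp: hom_br)
    then show "lbr M x y \<in> f ` I" "lbr M y x \<in> f ` I"
      using ideal_br_left[OF I a(1) h(1)] ideal_br_right[OF I a(1) h(1)] by auto
  qed
qed

lemma image_ideal_gen:
  assumes X: "X \<subseteq> carr L"
  shows "f ` ideal_gen L X = ideal_gen M (f ` X)"
proof
  let ?J = "ideal_gen M (f ` X)"
  have "ideal M ?J" using X by (intro B.ideal_ideal_gen) auto
  moreover have "X \<subseteq> {x \<in> carr L. f x \<in> ?J}"
    using X subset_ideal_gen[of "f ` X" M] by auto
  ultimately have "ideal_gen L X \<subseteq> {x \<in> carr L. f x \<in> ?J}"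
    by (intro ideal_gen_least ideal_preimage)
  then show "f ` ideal_gen L X \<subseteq> ?J" by auto
  have "ideal M (f ` ideal_gen L X)" using ideal_image[OF A.ideal_ideal_gen[OF X]] .
  moreover have "f ` X \<subseteq> f ` ideal_gen L X" using subset_ideal_gen[of X L] by auto
  ultimately show "?J \<subseteq> f ` ideal_gen L X" by (rule ideal_gen_least)
qed

lemma image_lie_br_set:
  assumes G: "G \<subseteq> carr L"
  shows "f ` {lie_br L m x |m x. m \<in> G \<and> x \<in> carr L} = {lie_br M m x |m x. m \<in> f ` G \<and> x \<in> carr M}"
proof
  show "f ` {lie_br L m x |m x. m \<in> G \<and> x \<in> carr L} \<subseteq> {lie_br M m x |m x. m \<in> f ` G \<and> x \<in> carr M}"
    using G by (force simp: hom_lie_br)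
  show "{lie_br M m x |m x. m \<in> f ` G \<and> x \<in> carr M} \<subseteq> f ` {lie_br L m x |m x. m \<in> G \<and> x \<in> carr L}"
  proof
    fix z assume "z \<in> {lie_br M m x |m x. m \<in> f ` G \<and> x \<in> carr M}"
    then obtain m x where mx: "m \<in> G" "x \<in> carr M" "z = lie_br M (f m) x" by auto
    obtain h where h: "h \<in> carr L" "x = f h" using mx(2) surj by auto
    have "z = f (lie_br L m h)" using mx h G by (auto simp: hom_lie_br)
    then show "z \<in> f ` {lie_br L m x |m x. m \<in> G \<and> x \<in> carr L}" using mx(1) h(1) by blast
  qed
qed

lemma image_lie_comm_carr:
  assumes G: "G \<subseteq> carr L"
  shows "f ` lie_comm L G (carr L) = lie_comm M (f ` G) (carr M)"
proof -
  have "{lie_br L m x |m x. m \<in> G \<and> x \<in> carr L} \<subseteq> carr L" using G by auto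
  then show ?thesis by (simp add: lie_comm_def image_ideal_gen image_lie_br_set[OF G])
qed

lemma image_gamma: "f ` gamma_lie L k = gamma_lie M k"
proof (induction k)
  case 0
  show ?case using surj by simp
next
  case (Suc k)
  then show ?case
    using A.gamma_subset_carr[of k] surj by (cases k) (simp_all add: image_lie_comm_carr)
qed

lemma image_zeta_subset: "f ` zeta_lie L i \<subseteq> zeta_lie M i"
proof (induction i)
  case 0
  then show ?case by simp
next
  case (Suc i)
  show ?case
  proof
    fix z assume "z \<in> f ` zeta_lie L (Suc i)"
    then obtain x where x: "x \<in> carr L" "\<forall>y\<in>carr L. lie_br L x y \<in> zeta_lie L i" "z = f x"
      by auto
    have "lie_br M z y \<in> zeta_lie M i" if y: "y \<in> carr M" for y
    proof -
      obtain h where h: "h \<in> carr L" "y = f h" using y surj by auto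
      have "lie_br M z y = f (lie_br L x h)" using x h by (simp add: hom_lie_br)
      then show ?thesis using Suc.IH x(2) h(1) by blast
    qed
    then show "z \<in> zeta_lie M (Suc i)" using x by simp
  qed
qed

end

section \<open>Isoclinisms\<close>

definition coset_related ::
  "nat \<Rightarrow> ('k, 'a) lalg \<Rightarrow> ('k, 'b) lalg \<Rightarrow> ('a set \<Rightarrow> 'b set) \<Rightarrow> (nat \<Rightarrow> 'a) \<Rightarrow> (nat \<Rightarrow> 'b) \<Rightarrow> bool"
  where
  "coset_related n L1 L2 \<eta> x y \<longleftrightarrow>
     (\<forall>i\<le>n. x i \<in> carr L1 \<and> y i \<in> carr L2 \<and>
        \<eta> (coset L1 (zeta_lie L1 n) (x i)) = coset L2 (zeta_lie L2 n) (y i))"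

definition isoclinism ::
  "nat \<Rightarrow> ('k, 'a) lalg \<Rightarrow> ('k, 'b) lalg \<Rightarrow> ('a set \<Rightarrow> 'b set) \<Rightarrow> ('a \<Rightarrow> 'b) \<Rightarrow> bool"
  where
  "isoclinism n L1 L2 \<eta> \<xi> \<longleftrightarrow>
     liso (quot L1 (zeta_lie L1 n)) (quot L2 (zeta_lie L2 n)) \<eta> \<and>
     liso (L1\<lparr>carr := gamma_lie L1 (Suc n)\<rparr>) (L2\<lparr>carr := gamma_lie L2 (Suc n)\<rparr>) \<xi> \<and>
     (\<forall>x y. coset_related n L1 L2 \<eta> x y \<longrightarrow> \<xi> (lie_iter L1 x n) = lie_iter L2 y n)"

lemma isoclinic_iff_isoclinism: "isoclinic n L1 L2 \<longleftrightarrow> (\<exists>\<eta> \<xi>. isoclinism n L1 L2 \<eta> \<xi>)"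
  by (simp add: isoclinic_def isoclinism_def coset_related_def)

definition lie_iter_zeta_invariant :: "nat \<Rightarrow> ('k, 'a) lalg \<Rightarrow> bool" where
  "lie_iter_zeta_invariant n L \<longleftrightarrow>
     (\<forall>x y. coset_related n L L id x y \<longrightarrow> lie_iter L x n = lie_iter L y n)"

lemma isoclinism_bij_betw_cosets:
  "isoclinism n L1 L2 \<eta> \<xi> \<Longrightarrow>
   bij_betw \<eta> (coset L1 (zeta_lie L1 n) ` carr L1) (coset L2 (zeta_lie L2 n) ` carr L2)"
  by (simp add: isoclinism_def liso_def carr_quot)

lemma isoclinism_image_coset:
  assumes "isoclinism n L1 L2 \<eta> \<xi>" "a \<in> carr L1"
  shows "\<exists>b\<in>carr L2. \<eta> (coset L1 (zeta_lie L1 n) a) = coset L2 (zeta_lie L2 n) b"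
proof -
  have "\<eta> (coset L1 (zeta_lie L1 n) a) \<in> coset L2 (zeta_lie L2 n) ` carr L2"
    using bij_betw_apply[OF isoclinism_bij_betw_cosets[OF assms(1)]] assms(2) by simp
  then show ?thesis by auto
qed

lemma isoclinism_preimage_coset:
  assumes "isoclinism n L1 L2 \<eta> \<xi>" "b \<in> carr L2"
  shows "\<exists>a\<in>carr L1. \<eta> (coset L1 (zeta_lie L1 n) a) = coset L2 (zeta_lie L2 n) b"
proof -
  have "coset L2 (zeta_lie L2 n) b \<in> \<eta> ` coset L1 (zeta_lie L1 n) ` carr L1"
    using isoclinism_bij_betw_cosets[OF assms(1)] assms(2) by (simp add: bij_betw_def)
  then show ?thesis by auto
qed

lemma isoclinism_obtain_related_right:
  assumes "isoclinism n L1 L2 \<eta> \<xi>" "\<forall>i\<le>n. x i \<in> carr L1"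
  obtains y where "coset_related n L1 L2 \<eta> x y"
proof -
  have "\<forall>i. \<exists>b. i \<le> n \<longrightarrow> b \<in> carr L2 \<and>
          \<eta> (coset L1 (zeta_lie L1 n) (x i)) = coset L2 (zeta_lie L2 n) b"
    using isoclinism_image_coset[OF assms(1)] assms(2) by blast
  then obtain y where "\<forall>i. i \<le> n \<longrightarrow> y i \<in> carr L2 \<and>
          \<eta> (coset L1 (zeta_lie L1 n) (x i)) = coset L2 (zeta_lie L2 n) (y i)"
    by metis
  then have "coset_related n L1 L2 \<eta> x y" using assms(2) by (simp add: coset_related_def)
  then show thesis by (rule that)
qed

lemma isoclinism_obtain_related_left:
  assumes "isoclinism n L1 L2 \<eta> \<xi>" "\<forall>i\<le>n. y i \<in> carr L2"
  obtains x where "coset_related n L1 L2 \<eta> x y"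
proof -
  have "\<forall>i. \<exists>a. i \<le> n \<longrightarrow> a \<in> carr L1 \<and>
          \<eta> (coset L1 (zeta_lie L1 n) a) = coset L2 (zeta_lie L2 n) (y i)"
    using isoclinism_preimage_coset[OF assms(1)] assms(2) by blast
  then obtain x where "\<forall>i. i \<le> n \<longrightarrow> x i \<in> carr L1 \<and>
          \<eta> (coset L1 (zeta_lie L1 n) (x i)) = coset L2 (zeta_lie L2 n) (y i)"
    by metis
  then have "coset_related n L1 L2 \<eta> x y" using assms(2) by (simp add: coset_related_def)
  then show thesis by (rule that)
qed

lemma isoclinism_lie_iter_zeta_invariant_left:
  assumes iso: "isoclinism n L1 L2 \<eta> \<xi>"
  shows "lie_iter_zeta_invariant n L1"
  unfolding lie_iter_zeta_invariant_def
proof (intro allI impI)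
  fix x x' assume xx': "coset_related n L1 L1 id x x'"
  then have x: "\<forall>i\<le>n. x i \<in> carr L1" and x': "\<forall>i\<le>n. x' i \<in> carr L1"
    by (auto simp: coset_related_def)
  obtain y where xy: "coset_related n L1 L2 \<eta> x y"
    using isoclinism_obtain_related_right[OF iso x] .
  then have "coset_related n L1 L2 \<eta> x' y" using xx' by (auto simp: coset_related_def)
  then have "\<xi> (lie_iter L1 x n) = \<xi> (lie_iter L1 x' n)"
    using iso xy by (simp add: isoclinism_def)
  moreover have "inj_on \<xi> (gamma_lie L1 (Suc n))"
    using iso by (simp add: isoclinism_def liso_def bij_betw_def)
  ultimately show "lie_iter L1 x n = lie_iter L1 x' n"
    using lie_iter_mem_gamma[OF x] lie_iter_mem_gamma[OF x'] by (auto dest: inj_onD)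
qed

lemma isoclinism_lie_iter_zeta_invariant_right:
  assumes iso: "isoclinism n L1 L2 \<eta> \<xi>"
  shows "lie_iter_zeta_invariant n L2"
  unfolding lie_iter_zeta_invariant_def
proof (intro allI impI)
  fix y y' assume yy': "coset_related n L2 L2 id y y'"
  then have y: "\<forall>i\<le>n. y i \<in> carr L2" by (auto simp: coset_related_def)
  obtain x where xy: "coset_related n L1 L2 \<eta> x y"
    using isoclinism_obtain_related_left[OF iso y] .
  then have "coset_related n L1 L2 \<eta> x y'" using yy' by (auto simp: coset_related_def)
  with xy iso show "lie_iter L2 y n = lie_iter L2 y' n"
    unfolding isoclinism_def by metis
qed

text \<open>lhom constrains a map only on the carrier, so inverting an isomorphism needs the
  carrier to be closed under the operations.\<close>

definition ops_closed :: "('k, 'a) lalg \<Rightarrow> bool" where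
  "ops_closed L \<longleftrightarrow>
     (\<forall>x\<in>carr L. \<forall>y\<in>carr L. ladd L x y \<in> carr L \<and> lbr L x y \<in> carr L) \<and>
     (\<forall>c. \<forall>x\<in>carr L. lsmul L c x \<in> carr L)"

lemma (in leibniz_algebra) ops_closed_quot: "ideal L I \<Longrightarrow> ops_closed (quot L I)"
  by (auto simp: ops_closed_def carr_quot quot_add quot_smul quot_br)

lemma (in leibniz_algebra) ops_closed_gamma: "ops_closed (L\<lparr>carr := gamma_lie L k\<rparr>)"
  using ideal_gamma[of k] gamma_subset_carr[of k]
  by (auto simp: ops_closed_def ideal_def subspace_def subset_eq)

lemma liso_inv_into:
  assumes f: "liso L M f" and closed: "ops_closed L"
  shows "liso M L (inv_into (carr L) f)"
proof -
  have bij: "bij_betw f (carr L) (carr M)" and hom: "lhom L M f"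
    using f by (auto simp: liso_def)
  let ?g = "inv_into (carr L) f"
  have inj: "inj_on f (carr L)" and img: "f ` carr L = carr M"
    using bij by (auto simp: bij_betw_def)
  have g_closed: "\<And>x. x \<in> carr M \<Longrightarrow> ?g x \<in> carr L"
    using img by (metis inv_into_into)
  have fg: "\<And>x. x \<in> carr M \<Longrightarrow> f (?g x) = x"
    using img by (metis f_inv_into_f)
  have gf: "\<And>a. a \<in> carr L \<Longrightarrow> ?g (f a) = a"
    using inj by (metis inv_into_f_f)
  have "lhom M L ?g" unfolding lhom_def
  proof (intro conjI ballI allI)
    fix x assume x: "x \<in> carr M"
    show "?g x \<in> carr L" using g_closed x .
    show "?g (lsmul M c x) = lsmul L c (?g x)" for c
    proof -
      have "lsmul M c x = f (lsmul L c (?g x))" using hom x g_closed fg by (simp add: lhom_def)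
      then show ?thesis using gf closed g_closed x by (simp add: ops_closed_def)
    qed
    fix y assume y: "y \<in> carr M"
    have "ladd M x y = f (ladd L (?g x) (?g y))" using hom x y g_closed fg by (simp add: lhom_def)
    then show "?g (ladd M x y) = ladd L (?g x) (?g y)"
      using gf closed g_closed x y by (simp add: ops_closed_def)
    have "lbr M x y = f (lbr L (?g x) (?g y))" using hom x y g_closed fg by (simp add: lhom_def)
    then show "?g (lbr M x y) = lbr L (?g x) (?g y)"
      using gf closed g_closed x y by (simp add: ops_closed_def)
  qed
  then show ?thesis using bij_betw_inv_into[OF bij] by (simp add: liso_def)
qed

lemma liso_comp: "liso A B f \<Longrightarrow> liso B C g \<Longrightarrow> liso A C (g \<circ> f)"
  by (auto simp: liso_def lhom_def intro: bij_betw_trans)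

lemma isoclinism_inv_into:
  assumes iso: "isoclinism n L1 L2 \<eta> \<xi>" and L1: "leibniz L1"
  shows "isoclinism n L2 L1 (inv_into (carr (quot L1 (zeta_lie L1 n))) \<eta>)
                             (inv_into (gamma_lie L1 (Suc n)) \<xi>)"
    (is "isoclinism n L2 L1 ?\<eta>' ?\<xi>'")
proof -
  interpret leibniz_algebra L1 by (rule leibniz_algebra.intro) (rule L1)
  have \<eta>: "liso (quot L1 (zeta_lie L1 n)) (quot L2 (zeta_lie L2 n)) \<eta>"
    and \<xi>: "liso (L1\<lparr>carr := gamma_lie L1 (Suc n)\<rparr>) (L2\<lparr>carr := gamma_lie L2 (Suc n)\<rparr>) \<xi>"
    using iso by (auto simp: isoclinism_def)
  have \<eta>_bij: "bij_betw \<eta> (carr (quot L1 (zeta_lie L1 n))) (carr (quot L2 (zeta_lie L2 n)))"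
    using \<eta> by (simp add: liso_def)
  have \<xi>_inj: "inj_on \<xi> (gamma_lie L1 (Suc n))"
    using \<xi> by (simp add: liso_def bij_betw_def)
  have "?\<xi>' (lie_iter L2 y n) = lie_iter L1 x n" if yx: "coset_related n L2 L1 ?\<eta>' y x" for x y
  proof -
    have "\<eta> (coset L1 (zeta_lie L1 n) (x i)) = coset L2 (zeta_lie L2 n) (y i)" if i: "i \<le> n" for i
    proof -
      have "coset L2 (zeta_lie L2 n) (y i) \<in> \<eta> ` carr (quot L1 (zeta_lie L1 n))"
        using yx i \<eta>_bij by (auto simp: coset_related_def bij_betw_def carr_quot)
      from f_inv_into_f[OF this] show ?thesis using yx i by (simp add: coset_related_def)
    qed
    then have "coset_related n L1 L2 \<eta> x y" using yx by (simp add: coset_related_def)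
    then have "\<xi> (lie_iter L1 x n) = lie_iter L2 y n" using iso by (simp add: isoclinism_def)
    moreover have "lie_iter L1 x n \<in> gamma_lie L1 (Suc n)"
      using yx by (auto simp: coset_related_def intro: lie_iter_mem_gamma)
    ultimately show ?thesis using inv_into_f_f[OF \<xi>_inj] by metis
  qed
  then show ?thesis
    using liso_inv_into[OF \<eta> ops_closed_quot[OF ideal_zeta]] liso_inv_into[OF \<xi> ops_closed_gamma]
    by (simp add: isoclinism_def)
qed

lemma isoclinism_comp:
  assumes iso12: "isoclinism n L1 L2 \<eta> \<xi>" and iso23: "isoclinism n L2 L3 \<eta>' \<xi>'"
  shows "isoclinism n L1 L3 (\<eta>' \<circ> \<eta>) (\<xi>' \<circ> \<xi>)"
proof -
  have "(\<xi>' \<circ> \<xi>) (lie_iter L1 x n) = lie_iter L3 z n"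
    if xz: "coset_related n L1 L3 (\<eta>' \<circ> \<eta>) x z" for x z
  proof -
    have x: "\<forall>i\<le>n. x i \<in> carr L1" using xz by (simp add: coset_related_def)
    obtain y where xy: "coset_related n L1 L2 \<eta> x y"
      using isoclinism_obtain_related_right[OF iso12 x] .
    then have "coset_related n L2 L3 \<eta>' y z" using xz by (auto simp: coset_related_def)
    then show ?thesis using xy iso12 iso23 by (simp add: isoclinism_def)
  qed
  then show ?thesis using iso12 iso23 by (auto simp: isoclinism_def intro: liso_comp)
qed

lemma isoclinic_sym: "leibniz L1 \<Longrightarrow> isoclinic n L1 L2 \<Longrightarrow> isoclinic n L2 L1"
  using isoclinism_inv_into by (metis isoclinic_iff_isoclinism)

lemma isoclinic_trans: "isoclinic n L1 L2 \<Longrightarrow> isoclinic n L2 L3 \<Longrightarrow> isoclinic n L1 L3"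
  using isoclinism_comp by (metis isoclinic_iff_isoclinism)

lemma isoclinic_lie_iter_zeta_invariant:
  "isoclinic n L1 L2 \<Longrightarrow> lie_iter_zeta_invariant n L1 \<and> lie_iter_zeta_invariant n L2"
  by (meson isoclinic_iff_isoclinism isoclinism_lie_iter_zeta_invariant_left
      isoclinism_lie_iter_zeta_invariant_right)

section \<open>Epimorphisms whose kernel meets gamma_{n+1}^Lie trivially\<close>

locale gamma_injective_epi = leibniz_epi +
  fixes n :: nat
  assumes ker_gamma: "lkernel L M f \<inter> gamma_lie L (Suc n) = {lzero L}"
begin

text \<open>For i = 0 this is the kernel condition; each step moves one term down the lower series
  and one term up the upper series.\<close>

lemma mem_zeta_if_image_mem_zeta:
  "i \<le> n \<Longrightarrow> d \<in> gamma_lie L (Suc (n - i)) \<Longrightarrow> f d \<in> zeta_lie M i \<Longrightarrow> d \<in> zeta_lie L i"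
proof (induction i arbitrary: d)
  case 0
  then have "d \<in> lkernel L M f \<inter> gamma_lie L (Suc n)"
    using A.gamma_subset_carr by (auto simp: lkernel_def)
  then show ?case using ker_gamma by simp
next
  case (Suc i)
  have d: "d \<in> carr L" using Suc.prems A.gamma_subset_carr by blast
  have "lie_br L d y \<in> zeta_lie L i" if y: "y \<in> carr L" for y
  proof (rule Suc.IH)
    show "i \<le> n" using Suc.prems(1) by simp
    have "Suc (n - i) = Suc (Suc (n - Suc i))" using Suc.prems(1) by simp
    then show "lie_br L d y \<in> gamma_lie L (Suc (n - i))"
      using Suc.prems(2) y by (simp add: lie_br_mem_lie_comm)
    show "f (lie_br L d y) \<in> zeta_lie M i" using Suc.prems(3) d y by (simp add: hom_lie_br)
  qed
  then show ?case using d by simp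
qed

lemma mem_zeta_iff_image_mem_zeta: "d \<in> carr L \<Longrightarrow> d \<in> zeta_lie L n \<longleftrightarrow> f d \<in> zeta_lie M n"
  using mem_zeta_if_image_mem_zeta[of n d] image_zeta_subset[of n] by auto

lemma coset_eq_iff_image_coset_eq:
  assumes a: "a \<in> carr L" and b: "b \<in> carr L"
  shows "coset L (zeta_lie L n) a = coset L (zeta_lie L n) b \<longleftrightarrow>
         coset M (zeta_lie M n) (f a) = coset M (zeta_lie M n) (f b)"
proof -
  have Z: "subspace L (zeta_lie L n)" "subspace M (zeta_lie M n)"
    using A.ideal_zeta B.ideal_zeta by (auto intro: ideal_subspace)
  have "f (ladd L b (A.neg a)) = ladd M (f b) (B.neg (f a))"
    using a b by (simp add: hom_add hom_neg)
  then show ?thesis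
    using a b A.coset_eq_iff[OF Z(1)] B.coset_eq_iff[OF Z(2)] mem_zeta_iff_image_mem_zeta by simp
qed

lemma lie_iter_zeta_invariant_image:
  assumes inv: "lie_iter_zeta_invariant n L"
  shows "lie_iter_zeta_invariant n M"
  unfolding lie_iter_zeta_invariant_def
proof (intro allI impI)
  fix y y' assume yy': "coset_related n M M id y y'"
  then have y: "\<forall>i\<le>n. y i \<in> carr M" and y': "\<forall>i\<le>n. y' i \<in> carr M"
    by (auto simp: coset_related_def)
  obtain x where x: "\<forall>i\<le>n. x i \<in> carr L \<and> f (x i) = y i"
    by (rule obtain_preimage_seq[OF y])
  obtain x' where x': "\<forall>i\<le>n. x' i \<in> carr L \<and> f (x' i) = y' i"
    by (rule obtain_preimage_seq[OF y'])
  have "coset L (zeta_lie L n) (x i) = coset L (zeta_lie L n) (x' i)" if i: "i \<le> n" for i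
    using yy' x x' i coset_eq_iff_image_coset_eq[of "x i" "x' i"] by (simp add: coset_related_def)
  then have "coset_related n L L id x x'" using x x' by (simp add: coset_related_def)
  then have "lie_iter L x n = lie_iter L x' n" using inv by (simp add: lie_iter_zeta_invariant_def)
  then show "lie_iter M y n = lie_iter M y' n"
    using hom_lie_iter_eq[OF x] hom_lie_iter_eq[OF x'] by simp
qed

definition quot_map where
  "quot_map A = coset M (zeta_lie M n) (f (SOME a. a \<in> A))"

lemma quot_map_coset:
  assumes a: "a \<in> carr L"
  shows "quot_map (coset L (zeta_lie L n) a) = coset M (zeta_lie M n) (f a)"
proof -
  have Z: "subspace L (zeta_lie L n)" "subspace M (zeta_lie M n)"
    using A.ideal_zeta B.ideal_zeta by (auto intro: ideal_subspace)
  obtain z where z: "z \<in> zeta_lie L n" "(SOME x. x \<in> coset L (zeta_lie L n) a) = ladd L a z"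
    by (rule A.some_coset_rep[OF Z(1) a])
  have zc: "z \<in> carr L" using z(1) A.zeta_subset_carr by blast
  have "f z \<in> zeta_lie M n" using image_zeta_subset z(1) by blast
  then show ?thesis
    unfolding quot_map_def using z(2) a zc B.coset_add_eq[OF Z(2)] by (simp add: hom_add)
qed

lemma liso_quot_map: "liso (quot L (zeta_lie L n)) (quot M (zeta_lie M n)) quot_map"
proof -
  have IL: "ideal L (zeta_lie L n)" and IM: "ideal M (zeta_lie M n)"
    by (rule A.ideal_zeta B.ideal_zeta)+
  have "lhom (quot L (zeta_lie L n)) (quot M (zeta_lie M n)) quot_map"
    unfolding lhom_def carr_quot
  proof (intro conjI ballI allI)
    fix X Y assume "X \<in> coset L (zeta_lie L n) ` carr L" "Y \<in> coset L (zeta_lie L n) ` carr L"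
    then obtain a b where a: "a \<in> carr L" "X = coset L (zeta_lie L n) a"
      and b: "b \<in> carr L" "Y = coset L (zeta_lie L n) b" by blast
    show "quot_map X \<in> coset M (zeta_lie M n) ` carr M" using a by (simp add: quot_map_coset)
    show "quot_map (ladd (quot L (zeta_lie L n)) X Y) =
          ladd (quot M (zeta_lie M n)) (quot_map X) (quot_map Y)"
      using a b by (simp add: A.quot_add[OF IL] B.quot_add[OF IM] quot_map_coset hom_add)
    show "quot_map (lbr (quot L (zeta_lie L n)) X Y) =
          lbr (quot M (zeta_lie M n)) (quot_map X) (quot_map Y)"
      using a b by (simp add: A.quot_br[OF IL] B.quot_br[OF IM] quot_map_coset hom_br)
    show "quot_map (lsmul (quot L (zeta_lie L n)) c X) =
          lsmul (quot M (zeta_lie M n)) c (quot_map X)" for c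
      using a by (simp add: A.quot_smul[OF IL] B.quot_smul[OF IM] quot_map_coset hom_smul)
  qed
  moreover have "inj_on quot_map (coset L (zeta_lie L n) ` carr L)"
  proof (rule inj_onI)
    fix X Y assume "X \<in> coset L (zeta_lie L n) ` carr L" "Y \<in> coset L (zeta_lie L n) ` carr L"
      and XY: "quot_map X = quot_map Y"
    then obtain a b where a: "a \<in> carr L" "X = coset L (zeta_lie L n) a"
      and b: "b \<in> carr L" "Y = coset L (zeta_lie L n) b" by blast
    show "X = Y" using XY a b coset_eq_iff_image_coset_eq[OF a(1) b(1)] by (simp add: quot_map_coset)
  qed
  moreover have "quot_map ` coset L (zeta_lie L n) ` carr L = coset M (zeta_lie M n) ` carr M"
    using surj by (force simp: image_image quot_map_coset)
  ultimately show ?thesis by (simp add: liso_def bij_betw_def carr_quot)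
qed

lemma liso_gamma: "liso (L\<lparr>carr := gamma_lie L (Suc n)\<rparr>) (M\<lparr>carr := gamma_lie M (Suc n)\<rparr>) f"
proof -
  have G: "subspace L (gamma_lie L (Suc n))" using A.ideal_gamma ideal_subspace by blast
  have Gc: "\<And>x. x \<in> gamma_lie L (Suc n) \<Longrightarrow> x \<in> carr L" using A.gamma_subset_carr by blast
  have "lhom (L\<lparr>carr := gamma_lie L (Suc n)\<rparr>) (M\<lparr>carr := gamma_lie M (Suc n)\<rparr>) f"
    using image_gamma[of "Suc n"] by (auto simp: lhom_def hom_add hom_br hom_smul Gc)
  moreover have "inj_on f (gamma_lie L (Suc n))"
  proof (rule inj_onI)
    fix a b assume a: "a \<in> gamma_lie L (Suc n)" and b: "b \<in> gamma_lie L (Suc n)" and ab: "f a = f b"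
    have ab_carr: "a \<in> carr L" "b \<in> carr L" using a b A.gamma_subset_carr by auto
    have "ladd L a (A.neg b) \<in> lkernel L M f \<inter> gamma_lie L (Suc n)"
      using subspace_add[OF G a A.subspace_neg[OF G b]] ab_carr ab
      by (simp add: lkernel_def hom_add hom_neg)
    then show "a = b" using ker_gamma ab_carr by (auto intro: A.add_neg_eq_zeroD)
  qed
  ultimately show ?thesis using image_gamma by (simp add: liso_def bij_betw_def)
qed

lemma isoclinism_quot_map:
  assumes inv: "lie_iter_zeta_invariant n M"
  shows "isoclinism n L M quot_map f"
proof -
  have "f (lie_iter L x n) = lie_iter M y n" if xy: "coset_related n L M quot_map x y" for x y
  proof -
    have x: "\<forall>i\<le>n. x i \<in> carr L" using xy by (simp add: coset_related_def)
    have "coset_related n M M id (\<lambda>i. f (x i)) y"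
      using xy by (auto simp: coset_related_def quot_map_coset)
    then have "lie_iter M (\<lambda>i. f (x i)) n = lie_iter M y n"
      using inv by (simp add: lie_iter_zeta_invariant_def)
    then show ?thesis using hom_lie_iter[OF x] by simp
  qed
  then show ?thesis unfolding isoclinism_def using liso_quot_map liso_gamma by blast
qed

lemma isoclinic_if_lie_iter_zeta_invariant:
  "lie_iter_zeta_invariant n L \<or> lie_iter_zeta_invariant n M \<Longrightarrow> isoclinic n L M"
  using isoclinism_quot_map lie_iter_zeta_invariant_image isoclinic_iff_isoclinism by blast

end

lemma gamma_injective_epiI:
  "leibniz L \<Longrightarrow> leibniz M \<Longrightarrow> lhom L M f \<Longrightarrow> f ` carr L = carr M \<Longrightarrow>
   lkernel L M f \<inter> gamma_lie L (Suc n) = {lzero L} \<Longrightarrow> gamma_injective_epi L M f n"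
  by (simp add: gamma_injective_epi_def gamma_injective_epi_axioms_def leibniz_epi_def
      leibniz_epi_axioms_def leibniz_hom_def leibniz_hom_axioms_def leibniz_algebra_def)

text \<open>The algebra H of the "only if" direction: a copy of L in the product type prescribed by
  the statement.\<close>

definition pair_copy :: "'c \<Rightarrow> ('k, 'b) lalg \<Rightarrow> ('k, 'c \<times> 'b) lalg" where
  "pair_copy a L =
     \<lparr>carr = Pair a ` carr L,
      ladd = (\<lambda>p q. (a, ladd L (snd p) (snd q))),
      lzero = (a, lzero L),
      lsmul = (\<lambda>c p. (a, lsmul L c (snd p))),
      lbr = (\<lambda>p q. (a, lbr L (snd p) (snd q)))\<rparr>"

context leibniz_algebra
begin

lemma leibniz_pair_copy: "leibniz (pair_copy a L)"
proof -
  have "\<exists>q\<in>carr (pair_copy a L). ladd (pair_copy a L) p q = lzero (pair_copy a L)"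
    if "p \<in> carr (pair_copy a L)" for p
    using that ex_add_inverse by (auto simp: pair_copy_def)
  then show ?thesis
    unfolding leibniz_def vspace_def
    by (intro conjI) (auto simp: pair_copy_def add_ac smul_add add_smul smul_smul
        br_add_left br_add_right br_smul_left br_smul_right leibniz_identity)
qed

lemma gamma_injective_epi_pair_copy: "gamma_injective_epi (pair_copy a L) L snd n"
proof (rule gamma_injective_epiI)
  show "leibniz (pair_copy a L)" by (rule leibniz_pair_copy)
  show "leibniz L" by (rule leibniz)
  show "lhom (pair_copy a L) L snd" by (auto simp: lhom_def pair_copy_def)
  show "snd ` carr (pair_copy a L) = carr L" by (force simp: pair_copy_def)
  interpret C: leibniz_algebra "pair_copy a L" by (rule leibniz_algebra.intro) (rule leibniz_pair_copy)
  have "lkernel (pair_copy a L) L snd = {lzero (pair_copy a L)}"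
    by (auto simp: lkernel_def pair_copy_def)
  moreover have "lzero (pair_copy a L) \<in> gamma_lie (pair_copy a L) (Suc n)"
    using subspace_zero[OF ideal_subspace[OF C.ideal_gamma]] .
  ultimately show "lkernel (pair_copy a L) L snd \<inter> gamma_lie (pair_copy a L) (Suc n) =
                   {lzero (pair_copy a L)}" by blast
qed

end

theorem mainTheorem9:
  fixes n :: nat
    and L1 :: "('k::field, 'a) lalg" and L2 :: "('k, 'b) lalg"
  assumes half: "(2::'k) \<noteq> 0"
    and l1: "leibniz L1" and l2: "leibniz L2"
  shows "(isoclinic n L1 L2 \<longrightarrow>
            (\<exists>(H :: ('k, 'a \<times> 'b) lalg) \<theta>. leibniz H \<and> isoclinic n H L1 \<and>
                lhom H L2 \<theta> \<and> \<theta> ` carr H = carr L2 \<and>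
                lkernel H L2 \<theta> \<inter> gamma_lie H (Suc n) = {lzero H}))
       \<and> (\<forall>(H :: ('k, 'c) lalg) \<theta>. leibniz H \<and> isoclinic n H L1 \<and>
                lhom H L2 \<theta> \<and> \<theta> ` carr H = carr L2 \<and>
                lkernel H L2 \<theta> \<inter> gamma_lie H (Suc n) = {lzero H}
              \<longrightarrow> isoclinic n L1 L2)"
proof (intro conjI impI allI)
  assume iso: "isoclinic n L1 L2"
  let ?H = "pair_copy (lzero L1) L2"
  interpret H: gamma_injective_epi ?H L2 snd n
    using l2 by (rule leibniz_algebra.gamma_injective_epi_pair_copy[OF leibniz_algebra.intro])
  have "isoclinic n ?H L2"
    using isoclinic_lie_iter_zeta_invariant[OF iso] H.isoclinic_if_lie_iter_zeta_invariant by blast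
  then have "isoclinic n ?H L1" using isoclinic_trans isoclinic_sym[OF l1 iso] by blast
  then show "\<exists>(H :: ('k, 'a \<times> 'b) lalg) \<theta>. leibniz H \<and> isoclinic n H L1 \<and>
                lhom H L2 \<theta> \<and> \<theta> ` carr H = carr L2 \<and>
                lkernel H L2 \<theta> \<inter> gamma_lie H (Suc n) = {lzero H}"
    using H.A.leibniz H.hom H.surj H.ker_gamma by blast
next
  fix H :: "('k, 'c) lalg" and \<theta>
  assume "leibniz H \<and> isoclinic n H L1 \<and> lhom H L2 \<theta> \<and> \<theta> ` carr H = carr L2 \<and>
          lkernel H L2 \<theta> \<inter> gamma_lie H (Suc n) = {lzero H}"
  then have H: "leibniz H" and iso: "isoclinic n H L1"
    and epi: "gamma_injective_epi H L2 \<theta> n"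
    using l2 by (auto intro: gamma_injective_epiI)
  have "isoclinic n H L2"
    using isoclinic_lie_iter_zeta_invariant[OF iso]
      gamma_injective_epi.isoclinic_if_lie_iter_zeta_invariant[OF epi] by blast
  then show "isoclinic n L1 L2" using isoclinic_trans isoclinic_sym[OF H iso] by blast
qed

end
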